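(* Let $n\geq 1$ and let $i,j\geq 0$ be integers. Let $F_{n,i,j}$ denote the set of functions $f\colon[n+1]\to[n]$ such that the orbit of $n+1$ under $f$ has exactly $i$ elements and $f$ has exactly $j$ periodic points. Then \[ |F_{n,i+1,j}|=\sum_{s=0}^{\min(i,j)-1}\frac{(i+j-s-1)\, n!}{(n-i-j+s+1)!}\,n^{\,n-i-j+s}, \] with the convention that $1/m!=0$ for negative integers $m$ (and an empty sum equals $0$).
   Context: $[m]=\{1,\dots,m\}$. For $f\colon[n+1]\to[n]$, the orbit of $x$ is the set $\{x,f(x),f^2(x),\dots\}$ (iterating $f$, which makes sense since $[n]\subseteq[n+1]$), and $x$ is a periodic point of $f$ if $f^k(x)=x$ for some $k\geq 1$. *)

theory Defs
  imports Complex_Main "HOL-Library.FuncSet"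
begin

definition orbit_of :: "(nat \<Rightarrow> nat) \<Rightarrow> nat \<Rightarrow> nat set" where
  "orbit_of f x = {(f ^^ k) x | k. True}"

definition periodic_pt :: "(nat \<Rightarrow> nat) \<Rightarrow> nat \<Rightarrow> bool" where
  "periodic_pt f x \<longleftrightarrow> (\<exists>k\<ge>1. (f ^^ k) x = x)"

definition Fset :: "nat \<Rightarrow> nat \<Rightarrow> nat \<Rightarrow> (nat \<Rightarrow> nat) set" where
  "Fset n i j = {f \<in> {1..n+1} \<rightarrow>\<^sub>E {1..n}.
      card (orbit_of f (n+1)) = i \<and> card {x \<in> {1..n+1}. periodic_pt f x} = j}"

definition inv_fact :: "int \<Rightarrow> real" where
  "inv_fact m = (if m < 0 then 0 else 1 / fact (nat m))"

end

theory Submission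
  imports Defs "HOL-Combinatorics.Cycles"
begin

text \<open>
  The orbit of \<open>n + 1\<close> is a lasso \<open>n + 1 = x\<^sub>0 \<mapsto> x\<^sub>1 \<mapsto> \<dots> \<mapsto> x\<^sub>i \<mapsto> x\<^bsub>i - s\<^esub>\<close>
  whose cycle has \<open>s + 1\<close> points (\<open>s < i\<close>), and \<open>f\<close> is determined by the lasso together with
  its restriction \<open>g\<close> to \<open>R = [n] - {x\<^sub>1, \<dots>, x\<^sub>i}\<close>, an arbitrary map \<open>R \<rightarrow> R \<union> {x\<^sub>1, \<dots>, x\<^sub>i}\<close>.
  The other periodic points of \<open>f\<close> are the points on cycles of \<open>g\<close> inside \<open>R\<close>.
  A map \<open>g : R \<rightarrow> R \<union> T\<close> with \<open>p\<close> such points is a permutation of a \<open>p\<close>-set \<open>P \<subseteq> R\<close> together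
  with a forest on \<open>R - P\<close> rooted in \<open>T \<union> P\<close>, and by the generalised Cayley formula, proved by
  peeling off the layer of vertices adjacent to the roots, there are \<open>t (k + t)^(k - 1)\<close> forests
  on \<open>k\<close> vertices rooted in \<open>t\<close> roots. Summing over \<open>s\<close> and the \<open>n! / (n - i)!\<close> choices of
  \<open>x\<^sub>1, \<dots>, x\<^sub>i\<close> gives the formula; its factor \<open>i + j - s - 1\<close> is the number of roots
  \<open>i + p\<close> for \<open>p = j - s - 1\<close>.
\<close>

section \<open>Iterates\<close>

lemma funpow_eq_if_orbit_in:
  assumes "\<And>m. m < k \<Longrightarrow> (g ^^ m) x \<in> S" and "\<And>y. y \<in> S \<Longrightarrow> g y = h y"
  shows "(g ^^ k) x = (h ^^ k) x"
  using assms(1)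
proof (induction k)
  case (Suc k)
  have "(g ^^ k) x \<in> S" using Suc.prems by simp
  moreover have "(g ^^ k) x = (h ^^ k) x" using Suc by simp
  ultimately show ?case using assms(2) by (metis comp_apply funpow.simps(2))
qed simp

lemma funpow_in_invariant:
  assumes "\<And>y. y \<in> S \<Longrightarrow> g y \<in> S" and "x \<in> S"
  shows "(g ^^ k) x \<in> S"
  by (induction k) (use assms in auto)

lemma funpow_first_hit:
  assumes step: "\<And>y. y \<in> A \<Longrightarrow> g y \<in> A \<union> B" and "A \<inter> B = {}"
    and "x \<in> A" and "(g ^^ k) x \<in> B"
  obtains k' where "(g ^^ k') x \<in> B" and "\<And>m. m < k' \<Longrightarrow> (g ^^ m) x \<in> A"
proof -
  have ex: "\<exists>k. (g ^^ k) x \<notin> A" using assms(2,4) by blast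
  define k' where "k' = (LEAST k. (g ^^ k) x \<notin> A)"
  have out: "(g ^^ k') x \<notin> A" unfolding k'_def by (rule LeastI_ex[OF ex])
  have before: "(g ^^ m) x \<in> A" if "m < k'" for m
    using that not_less_Least unfolding k'_def by blast
  obtain q where q: "k' = Suc q" using out \<open>x \<in> A\<close> by (cases k') auto
  have "(g ^^ k') x \<in> A \<union> B" using step[OF before[of q]] q by simp
  with out before show thesis using that by blast
qed

lemma funpow_repeats:
  assumes "\<And>m. (g ^^ m) x \<in> R" and "finite R"
  obtains a b where "a < b" and "(g ^^ a) x = (g ^^ b) x"
proof -
  let ?h = "\<lambda>m. (g ^^ m) x"
  have "card (?h ` {..card R}) \<le> card R"
    using assms by (intro card_mono) auto
  then have "\<not> inj_on ?h {..card R}" by (intro pigeonhole) simp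
  then obtain a b where "a \<noteq> b" "?h a = ?h b" unfolding inj_on_def by blast
  then show thesis using that by (metis linorder_neqE_nat)
qed

lemma funpow_mult_fixpoint: "(g ^^ k) x = x \<Longrightarrow> (g ^^ (k * q)) x = x"
  by (induction q) (simp_all add: funpow_add)

text \<open>\<open>x\<close> is itself an iterate of \<open>(g ^^ m) x\<close>.\<close>
lemma periodic_in_invariant:
  assumes "\<And>y. y \<in> S \<Longrightarrow> g y \<in> S" and "(g ^^ k) x = x" "k \<ge> 1" and "(g ^^ m) x \<in> S"
  shows "x \<in> S"
proof -
  have "(g ^^ (k * m)) x = x" using assms(2) by (rule funpow_mult_fixpoint)
  moreover have "k * m = (k * m - m) + m" using \<open>k \<ge> 1\<close> by simp
  ultimately have "x = (g ^^ (k * m - m)) ((g ^^ m) x)" by (metis comp_apply funpow_add)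
  then show ?thesis using funpow_in_invariant[of S g, OF assms(1,4)] by metis
qed

lemma orbit_of_lasso:
  assumes "finite (orbit_of f x)"
  defines "m \<equiv> card (orbit_of f x)"
  shows "inj_on (\<lambda>k. (f ^^ k) x) {..<m}" and "(f ^^ m) x \<in> (\<lambda>k. (f ^^ k) x) ` {..<m}"
proof -
  let ?a = "\<lambda>k. (f ^^ k) x"
  obtain p q where "p < q" "?a p = ?a q"
    using funpow_repeats[of f x "orbit_of f x"] assms(1) unfolding orbit_of_def by blast
  then have "?a q \<in> ?a ` {..<q}" by (metis image_eqI lessThan_iff)
  then have ex: "\<exists>M. ?a M \<in> ?a ` {..<M}" by blast
  define M where "M = (LEAST M. ?a M \<in> ?a ` {..<M})"
  have repeat: "?a M \<in> ?a ` {..<M}" unfolding M_def by (rule LeastI_ex[OF ex])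
  have inj: "inj_on ?a {..<M}"
  proof (rule inj_onI)
    have no_repeat: False if "p < q" "q < M" "?a p = ?a q" for p q
    proof -
      have "?a q \<in> ?a ` {..<q}" using that by (metis image_eqI lessThan_iff)
      then have "M \<le> q" unfolding M_def by (rule Least_le)
      with that show False by simp
    qed
    fix p q assume "p \<in> {..<M}" "q \<in> {..<M}" "?a p = ?a q"
    then show "p = q" using no_repeat[of p q] no_repeat[of q p] by (cases p q rule: linorder_cases) auto
  qed
  have "?a k \<in> ?a ` {..<M}" for k
  proof (induction k)
    case 0
    have "0 < M" using repeat by (cases M) auto
    then show ?case by force
  next
    case (Suc k)
    then obtain p where p: "p < M" "?a k = ?a p" by auto
    then have "?a (Suc k) = ?a (Suc p)" by simp
    moreover have "?a (Suc p) \<in> ?a ` {..<M}"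
    proof (cases "Suc p = M")
      case False
      then have "Suc p \<in> {..<M}" using p(1) by simp
      then show ?thesis by (rule imageI)
    qed (use repeat in simp)
    ultimately show ?case by simp
  qed
  then have "orbit_of f x = ?a ` {..<M}" unfolding orbit_of_def by auto
  then have "m = M" unfolding m_def using card_image[OF inj] by simp
  then show "inj_on ?a {..<m}" and "?a m \<in> ?a ` {..<m}" using inj repeat by simp_all
qed

section \<open>Rooted forests\<close>

definition rooted_forest_maps :: "'a set \<Rightarrow> 'a set \<Rightarrow> ('a \<Rightarrow> 'a) set" where
  "rooted_forest_maps R T = {g \<in> R \<rightarrow>\<^sub>E (R \<union> T). \<forall>x\<in>R. \<exists>k. (g ^^ k) x \<in> T}"

text \<open>The generalised Cayley formula: a forest on \<open>k\<close> labelled vertices whose trees are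
  attached to \<open>t\<close> given roots can be chosen in \<open>t (k + t)^(k - 1)\<close> ways.\<close>
definition num_forests :: "nat \<Rightarrow> nat \<Rightarrow> nat" where
  "num_forests k t = (if k = 0 then 1 else t * (k + t) ^ (k - 1))"

lemma finite_rooted_forest_maps:
  "finite R \<Longrightarrow> finite T \<Longrightarrow> finite (rooted_forest_maps R T)"
  unfolding rooted_forest_maps_def
  by (rule finite_subset[of _ "R \<rightarrow>\<^sub>E (R \<union> T)"]) (auto intro: finite_PiE)

lemma override_on_in_rooted_forest_maps:
  assumes "L \<subseteq> R" "R \<inter> T = {}" "a \<in> L \<rightarrow>\<^sub>E T" "b \<in> rooted_forest_maps (R - L) L"
  shows "override_on b a L \<in> rooted_forest_maps R T"
proof -
  let ?g = "override_on b a L"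
  have b_maps: "b \<in> (R - L) \<rightarrow>\<^sub>E ((R - L) \<union> L)" and b_reaches: "\<forall>x\<in>R - L. \<exists>k. (b ^^ k) x \<in> L"
    using assms(4) unfolding rooted_forest_maps_def by auto
  have "?g \<in> R \<rightarrow>\<^sub>E (R \<union> T)"
    using assms(1,3) b_maps by (auto simp: PiE_iff override_on_def extensional_def)
  moreover have "\<exists>k. (?g ^^ k) x \<in> T" if x: "x \<in> R" for x
  proof (cases "x \<in> L")
    case True
    then have "(?g ^^ 1) x \<in> T" using assms(3) by auto
    then show ?thesis by blast
  next
    case False
    obtain k where "(b ^^ k) x \<in> L" using b_reaches x False by blast
    then obtain k' where k': "(b ^^ k') x \<in> L" "\<And>m. m < k' \<Longrightarrow> (b ^^ m) x \<in> R - L"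
      using funpow_first_hit[of "R - L" b L x k] b_maps x False by blast
    have "(b ^^ k') x = (?g ^^ k') x"
      by (rule funpow_eq_if_orbit_in[where S = "R - L"]) (use k'(2) in auto)
    then have "(?g ^^ Suc k') x \<in> T" using k'(1) assms(3) by auto
    then show ?thesis by blast
  qed
  ultimately show ?thesis unfolding rooted_forest_maps_def by blast
qed

lemma rooted_forest_maps_top_layer:
  assumes "g \<in> rooted_forest_maps R T" "R \<inter> T = {}"
  defines "L \<equiv> {x \<in> R. g x \<in> T}"
  shows "restrict g (R - L) \<in> rooted_forest_maps (R - L) L" and "R \<noteq> {} \<Longrightarrow> L \<noteq> {}"
proof -
  have g_maps: "\<And>y. y \<in> R \<Longrightarrow> g y \<in> R \<union> T" and g_reaches: "\<forall>x\<in>R. \<exists>k. (g ^^ k) x \<in> T"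
    using assms(1) unfolding rooted_forest_maps_def by auto
  have reaches_L: "\<exists>k. (g ^^ k) x \<in> L" if x: "x \<in> R" for x
  proof -
    obtain k where "(g ^^ k) x \<in> T" using g_reaches x by blast
    then obtain k' where k': "(g ^^ k') x \<in> T" "\<And>m. m < k' \<Longrightarrow> (g ^^ m) x \<in> R"
      using funpow_first_hit[of R g T x k] g_maps assms(2) x by blast
    obtain q where q: "k' = Suc q" using k'(1) x assms(2) by (cases k') auto
    then have "(g ^^ q) x \<in> L" using k' unfolding L_def by auto
    then show ?thesis by blast
  qed
  show "R \<noteq> {} \<Longrightarrow> L \<noteq> {}" using reaches_L by blast
  have step: "g y \<in> (R - L) \<union> L" if "y \<in> R - L" for y
    using g_maps[of y] that unfolding L_def by auto
  have "\<exists>k. (restrict g (R - L) ^^ k) x \<in> L" if x: "x \<in> R - L" for x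
  proof -
    obtain k where "(g ^^ k) x \<in> L" using reaches_L x by blast
    then obtain k' where k': "(g ^^ k') x \<in> L" "\<And>m. m < k' \<Longrightarrow> (g ^^ m) x \<in> R - L"
      using funpow_first_hit[of "R - L" g L x k] step x by blast
    have "(g ^^ k') x = (restrict g (R - L) ^^ k') x"
      by (rule funpow_eq_if_orbit_in[where S = "R - L"]) (use k'(2) in auto)
    then show ?thesis using k'(1) by metis
  qed
  moreover have "restrict g (R - L) \<in> (R - L) \<rightarrow>\<^sub>E ((R - L) \<union> L)" using step by auto
  ultimately show "restrict g (R - L) \<in> rooted_forest_maps (R - L) L"
    unfolding rooted_forest_maps_def by blast
qed

lemma bij_betw_rooted_forest_maps:
  assumes "R \<inter> T = {}" "R \<noteq> {}"
  shows "bij_betw (\<lambda>(L, a, b). override_on b a L)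
    (SIGMA L:{L. L \<subseteq> R \<and> L \<noteq> {}}. (L \<rightarrow>\<^sub>E T) \<times> rooted_forest_maps (R - L) L)
    (rooted_forest_maps R T)" (is "bij_betw ?merge ?A ?B")
proof -
  define split where
    "split g = (let L = {x \<in> R. g x \<in> T} in (L, restrict g L, restrict g (R - L)))" for g
  have split_merge: "split (override_on b a L) = (L, a, b)"
    if L: "L \<subseteq> R" and a: "a \<in> L \<rightarrow>\<^sub>E T" and b: "b \<in> rooted_forest_maps (R - L) L" for L a b
  proof -
    have b_maps: "b \<in> (R - L) \<rightarrow>\<^sub>E ((R - L) \<union> L)"
      using b unfolding rooted_forest_maps_def by auto
    have "override_on b a L x \<in> T \<longleftrightarrow> x \<in> L" if "x \<in> R" for x
      using that L a b_maps assms(1) by (cases "x \<in> L") (auto simp: PiE_iff)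
    then have "{x \<in> R. override_on b a L x \<in> T} = L" using L by auto
    moreover have "restrict (override_on b a L) L = a"
      using a by (auto simp: restrict_def PiE_iff extensional_def)
    moreover have "restrict (override_on b a L) (R - L) = b"
      using b_maps by (auto simp: restrict_def PiE_iff extensional_def)
    ultimately show ?thesis unfolding split_def by simp
  qed
  have merge_split: "?merge (split g) = g"
    if "g \<in> rooted_forest_maps R T" for g
    using that by (auto simp: split_def Let_def rooted_forest_maps_def override_on_def PiE_iff
        extensional_def fun_eq_iff)
  have split_into: "split g \<in> ?A"
    if "g \<in> rooted_forest_maps R T" for g
    using rooted_forest_maps_top_layer[OF that assms(1)] assms(2) by (auto simp: split_def Let_def)
  show ?thesis
  proof (rule bij_betw_byWitness[where f' = split])
    show "\<forall>x\<in>?A. split (?merge x) = x" using split_merge by auto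
    show "?merge ` ?A \<subseteq> ?B" using override_on_in_rooted_forest_maps[OF _ assms(1)] by auto
    show "\<forall>g\<in>?B. ?merge (split g) = g" using merge_split by blast
    show "split ` ?B \<subseteq> ?A" using split_into by blast
  qed
qed

lemma sum_nonempty_subsets_card:
  fixes h :: "nat \<Rightarrow> 'b::comm_semiring_1"
  assumes "finite R"
  shows "(\<Sum>L | L \<subseteq> R \<and> L \<noteq> {}. h (card L)) = (\<Sum>l = 1..card R. of_nat (card R choose l) * h l)"
proof -
  let ?S = "{L. L \<subseteq> R \<and> L \<noteq> {}}"
  have fin: "finite ?S" using assms by (auto intro: finite_subset[of _ "Pow R"])
  have "card ` ?S \<subseteq> {1..card R}"
    using assms by (auto simp: Suc_le_eq card_gt_0_iff card_mono finite_subset[OF _ assms])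
  then have "(\<Sum>L\<in>?S. h (card L)) = (\<Sum>l = 1..card R. \<Sum>L | L \<in> ?S \<and> card L = l. h (card L))"
    by (rule sum.group[symmetric, OF fin, rotated]) simp
  also have "\<dots> = (\<Sum>l = 1..card R. of_nat (card R choose l) * h l)"
  proof (rule sum.cong[OF refl])
    fix l assume "l \<in> {1..card R}"
    then have "{L. L \<in> ?S \<and> card L = l} = {L. L \<subseteq> R \<and> card L = l}" by auto
    then show "(\<Sum>L | L \<in> ?S \<and> card L = l. h (card L)) = of_nat (card R choose l) * h l"
      using n_subsets[OF assms, of l] by simp
  qed
  finally show ?thesis .
qed

lemma num_forests_rec:
  assumes "k \<ge> 1"
  shows "(\<Sum>l = 1..k. (k choose l) * (t ^ l * num_forests (k - l) l)) = num_forests k t"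
proof -
  obtain m where k: "k = Suc m" using assms by (cases k) auto
  have summand: "(Suc m choose Suc l) * (t ^ Suc l * num_forests (m - l) (Suc l))
      = t * ((m choose l) * t ^ l * Suc m ^ (m - l))" if "l \<le> m" for l
  proof (cases "l = m")
    case False
    then have forests: "num_forests (m - l) (Suc l) = Suc l * Suc m ^ (m - l - 1)"
      using that by (simp add: num_forests_def)
    have power: "Suc m * Suc m ^ (m - l - 1) = Suc m ^ (m - l)"
      using that False by (simp flip: power_Suc)
    have "(Suc m choose Suc l) * (t ^ Suc l * num_forests (m - l) (Suc l))
        = (Suc l * (Suc m choose Suc l)) * t ^ Suc l * Suc m ^ (m - l - 1)"
      unfolding forests by (simp add: algebra_simps)
    also have "\<dots> = t * ((m choose l) * t ^ l * (Suc m * Suc m ^ (m - l - 1)))"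
      unfolding Suc_times_binomial by (simp add: algebra_simps)
    finally show ?thesis unfolding power .
  qed (simp add: num_forests_def)
  have "(\<Sum>l = 1..k. (k choose l) * (t ^ l * num_forests (k - l) l))
      = (\<Sum>l = 0..m. (Suc m choose Suc l) * (t ^ Suc l * num_forests (m - l) (Suc l)))"
    by (simp only: k One_nat_def sum.shift_bounds_cl_Suc_ivl diff_Suc_Suc)
  also have "\<dots> = (\<Sum>l = 0..m. t * ((m choose l) * t ^ l * Suc m ^ (m - l)))"
    by (rule sum.cong[OF refl], rule summand) simp
  also have "\<dots> = t * (\<Sum>l\<le>m. (m choose l) * t ^ l * Suc m ^ (m - l))"
    by (simp add: sum_distrib_left atLeast0AtMost)
  also have "\<dots> = num_forests k t"
    using binomial_ring[of t "Suc m" m] by (simp add: k num_forests_def add.commute)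
  finally show ?thesis .
qed

lemma card_rooted_forest_maps:
  "finite R \<Longrightarrow> finite T \<Longrightarrow> R \<inter> T = {} \<Longrightarrow>
    card (rooted_forest_maps R T) = num_forests (card R) (card T)"
proof (induction "card R" arbitrary: R T rule: less_induct)
  case less
  show ?case
  proof (cases "R = {}")
    case True
    then have "rooted_forest_maps R T = {\<lambda>_. undefined}" by (auto simp: rooted_forest_maps_def)
    then show ?thesis using True by (simp add: num_forests_def)
  next
    case False
    let ?S = "{L. L \<subseteq> R \<and> L \<noteq> {}}"
    have card_layer: "card ((L \<rightarrow>\<^sub>E T) \<times> rooted_forest_maps (R - L) L)
        = card T ^ card L * num_forests (card R - card L) (card L)" if "L \<in> ?S" for L
    proof -
      have L: "finite L" "L \<subseteq> R" "L \<noteq> {}" using that less.prems(1) finite_subset by auto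
      then have "card (R - L) < card R"
        using less.prems(1) by (intro psubset_card_mono) auto
      then have "card (rooted_forest_maps (R - L) L) = num_forests (card (R - L)) (card L)"
        using less L by auto
      then show ?thesis using L less.prems(1) by (simp add: card_cartesian_product card_PiE card_Diff_subset)
    qed
    have "card (rooted_forest_maps R T)
        = card (SIGMA L:?S. (L \<rightarrow>\<^sub>E T) \<times> rooted_forest_maps (R - L) L)"
      using bij_betw_same_card[OF bij_betw_rooted_forest_maps[OF less.prems(3) False]] by simp
    also have "\<dots> = (\<Sum>L\<in>?S. card T ^ card L * num_forests (card R - card L) (card L))"
    proof -
      have "finite ?S" using less.prems(1) by (auto intro: finite_subset[of _ "Pow R"])
      moreover have "\<forall>L\<in>?S. finite ((L \<rightarrow>\<^sub>E T) \<times> rooted_forest_maps (R - L) L)"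
        using less.prems(1,2) by (auto intro!: finite_PiE finite_rooted_forest_maps dest: finite_subset)
      ultimately show ?thesis using card_layer by simp
    qed
    also have "\<dots> = (\<Sum>l = 1..card R. (card R choose l) * (card T ^ l * num_forests (card R - l) l))"
      using sum_nonempty_subsets_card[OF less.prems(1),
          of "\<lambda>l. card T ^ l * num_forests (card R - l) l"] by simp
    also have "\<dots> = num_forests (card R) (card T)"
      using False less.prems(1) by (intro num_forests_rec) (simp add: Suc_le_eq card_gt_0_iff)
    finally show ?thesis .
  qed
qed

section \<open>Maps with a given number of cyclic points\<close>

text \<open>Requiring the orbit to stay in \<open>R\<close> discards spurious cycles through the junk values of
  \<open>g\<close> outside \<open>R\<close>.\<close>
definition cyclic_points :: "nat set \<Rightarrow> (nat \<Rightarrow> nat) \<Rightarrow> nat set" where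
  "cyclic_points R g = {x. periodic_pt g x \<and> orbit_of g x \<subseteq> R}"

definition maps_with_cyclic_points :: "nat set \<Rightarrow> nat set \<Rightarrow> nat \<Rightarrow> (nat \<Rightarrow> nat) set" where
  "maps_with_cyclic_points R T p = {g \<in> R \<rightarrow>\<^sub>E (R \<union> T). card (cyclic_points R g) = p}"

definition num_maps_with_cyclic_points :: "nat \<Rightarrow> nat \<Rightarrow> nat \<Rightarrow> nat" where
  "num_maps_with_cyclic_points k t p = (k choose p) * fact p * num_forests (k - p) (t + p)"

lemma cyclic_points_iff:
  "x \<in> cyclic_points R g \<longleftrightarrow> (\<exists>k\<ge>1. (g ^^ k) x = x) \<and> (\<forall>m. (g ^^ m) x \<in> R)"
  by (auto simp: cyclic_points_def periodic_pt_def orbit_of_def)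

lemma cyclic_points_subset: "cyclic_points R g \<subseteq> R"
  using cyclic_points_iff[of _ R g] by (metis funpow_0 subsetI)

lemma cyclic_points_step:
  assumes "x \<in> cyclic_points R g"
  shows "g x \<in> cyclic_points R g"
proof -
  obtain k where "k \<ge> 1" "(g ^^ k) x = x" and orbit: "\<And>m. (g ^^ m) x \<in> R"
    using assms by (auto simp: cyclic_points_iff)
  then have "(g ^^ k) (g x) = g x" by (metis funpow_swap1)
  moreover have "(g ^^ m) (g x) \<in> R" for m using orbit[of "Suc m"] by (simp add: funpow_swap1)
  ultimately show ?thesis using \<open>k \<ge> 1\<close> by (auto simp: cyclic_points_iff)
qed

lemma inj_on_cyclic_points: "inj_on g (cyclic_points R g)"
proof (rule inj_onI)
  fix a b assume "a \<in> cyclic_points R g" "b \<in> cyclic_points R g" and eq: "g a = g b"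
  then obtain ka kb where "ka \<ge> 1" "(g ^^ ka) a = a" "kb \<ge> 1" "(g ^^ kb) b = b"
    by (auto simp: cyclic_points_iff)
  then have "(g ^^ (ka * kb)) a = a" and "(g ^^ (ka * kb)) b = b"
    by (metis funpow_mult_fixpoint mult.commute)+
  moreover obtain K where "ka * kb = Suc K" using \<open>ka \<ge> 1\<close> \<open>kb \<ge> 1\<close> by (cases "ka * kb") auto
  ultimately show "a = b" using eq by (metis funpow_Suc_right comp_apply)
qed

lemma permutes_cyclic_points:
  assumes "finite R"
  shows "(\<lambda>x. if x \<in> cyclic_points R g then g x else x) permutes cyclic_points R g"
    (is "?s permutes ?P")
proof (rule bij_imp_permutes)
  have "finite ?P" using assms cyclic_points_subset finite_subset by blast
  moreover have "inj_on ?s ?P" using inj_on_cyclic_points by (auto simp: inj_on_def)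
  moreover have "?s ` ?P \<subseteq> ?P" using cyclic_points_step by auto
  ultimately show "bij_betw ?s ?P ?P" unfolding bij_betw_def by (metis endo_inj_surj)
qed simp

lemma override_on_permutes_in_PiE:
  assumes "s permutes P" "P \<subseteq> R" "h \<in> rooted_forest_maps (R - P) (T \<union> P)"
  shows "override_on h s P \<in> R \<rightarrow>\<^sub>E (R \<union> T)"
  using assms permutes_in_image[OF assms(1)]
  by (auto simp: rooted_forest_maps_def PiE_iff override_on_def extensional_def)

lemma cyclic_points_override_on:
  assumes "s permutes P" "P \<subseteq> R" "h \<in> rooted_forest_maps (R - P) (T \<union> P)"
    and "finite R" "R \<inter> T = {}"
  shows "cyclic_points R (override_on h s P) = P"
proof (intro equalityI subsetI)
  let ?g = "override_on h s P"
  have P_closed: "?g y \<in> P" if "y \<in> P" for y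
    using that permutes_in_image[OF assms(1)] by simp
  fix x
  assume "x \<in> cyclic_points R ?g"
  then obtain k where k: "k \<ge> 1" "(?g ^^ k) x = x" and orbit: "\<And>m. (?g ^^ m) x \<in> R"
    by (auto simp: cyclic_points_iff)
  show "x \<in> P"
  proof (rule ccontr)
    assume "x \<notin> P"
    have x: "x \<in> R - P" using orbit[of 0] \<open>x \<notin> P\<close> by simp
    have "\<And>y. y \<in> R - P \<Longrightarrow> h y \<in> (R - P) \<union> (T \<union> P)"
      and "\<exists>k. (h ^^ k) x \<in> T \<union> P"
      using assms(3) x by (auto simp: rooted_forest_maps_def)
    moreover have "(R - P) \<inter> (T \<union> P) = {}" using assms(5) by auto
    ultimately obtain k' where hit: "(h ^^ k') x \<in> T \<union> P" and "\<And>m. m < k' \<Longrightarrow> (h ^^ m) x \<in> R - P"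
      using funpow_first_hit[of "R - P" h "T \<union> P" x] x by blast
    then have "(h ^^ k') x = (?g ^^ k') x" by (intro funpow_eq_if_orbit_in[where S = "R - P"]) auto
    then have "(?g ^^ k') x \<in> P" using hit orbit[of k'] assms(5) by auto
    then show False using periodic_in_invariant[OF P_closed k(2,1)] \<open>x \<notin> P\<close> by blast
  qed
next
  let ?g = "override_on h s P"
  fix x
  assume "x \<in> P"
  have "permutation s" using permutes_imp_permutation[OF _ assms(1)] assms(2,4) finite_subset by blast
  then obtain k where "(s ^^ k) = id" "k > 0" by (rule permutation_is_nilpotent)
  moreover have s_orbit: "(s ^^ m) x \<in> P" for m
    using \<open>x \<in> P\<close> permutes_in_image[OF permutes_funpow[OF assms(1)]] by blast
  moreover have "(?g ^^ m) x = (s ^^ m) x" for m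
    by (rule funpow_eq_if_orbit_in[where S = P, symmetric]) (use s_orbit in auto)
  ultimately show "x \<in> cyclic_points R ?g"
    using assms(2) by (auto simp: cyclic_points_iff intro!: exI[of _ k])
qed

text \<open>Every point outside the cycles either leaves \<open>R\<close>, necessarily into \<open>T\<close>, or runs into a cycle.\<close>
lemma restrict_noncyclic_in_rooted_forest_maps:
  assumes g: "g \<in> R \<rightarrow>\<^sub>E (R \<union> T)" and "finite R" "R \<inter> T = {}"
  defines "P \<equiv> cyclic_points R g"
  shows "restrict g (R - P) \<in> rooted_forest_maps (R - P) (T \<union> P)"
proof -
  have g_maps: "\<And>y. y \<in> R \<Longrightarrow> g y \<in> R \<union> T" using g by auto
  have reaches: "\<exists>k. (g ^^ k) x \<in> T \<union> P" if x: "x \<in> R" for x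
  proof (cases "\<forall>m. (g ^^ m) x \<in> R")
    case True
    then obtain a b where ab: "a < b" "(g ^^ a) x = (g ^^ b) x"
      using funpow_repeats[of g x R] \<open>finite R\<close> by blast
    have "(g ^^ d) ((g ^^ a) x) = (g ^^ (d + a)) x" for d by (simp add: funpow_add)
    then have "(g ^^ (b - a)) ((g ^^ a) x) = (g ^^ a) x" and "b - a \<ge> 1"
      and "(g ^^ m) ((g ^^ a) x) \<in> R" for m
      using ab True by simp_all
    then have "(g ^^ a) x \<in> P" unfolding P_def cyclic_points_iff by blast
    then show ?thesis by blast
  next
    case False
    then obtain m where "(g ^^ m) x \<in> UNIV - R" by blast
    then obtain k where out: "(g ^^ k) x \<notin> R" and before: "\<And>m. m < k \<Longrightarrow> (g ^^ m) x \<in> R"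
      using funpow_first_hit[of R g "UNIV - R" x m] x by blast
    obtain q where "k = Suc q" using out x by (cases k) auto
    then have "(g ^^ k) x \<in> R \<union> T" using g_maps[OF before[of q]] by simp
    then show ?thesis using out by blast
  qed
  have step: "g y \<in> (R - P) \<union> (T \<union> P)" if "y \<in> R - P" for y using g_maps[of y] that by auto
  have "\<exists>k. (restrict g (R - P) ^^ k) x \<in> T \<union> P" if x: "x \<in> R - P" for x
  proof -
    obtain k where "(g ^^ k) x \<in> T \<union> P" using reaches x by blast
    moreover have "(R - P) \<inter> (T \<union> P) = {}" using assms(3) by auto
    ultimately obtain k' where hit: "(g ^^ k') x \<in> T \<union> P" and "\<And>m. m < k' \<Longrightarrow> (g ^^ m) x \<in> R - P"
      using funpow_first_hit[of "R - P" g "T \<union> P" x k] step x by blast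
    then have "(g ^^ k') x = (restrict g (R - P) ^^ k') x"
      by (intro funpow_eq_if_orbit_in[where S = "R - P"]) auto
    then show ?thesis using hit by metis
  qed
  moreover have "restrict g (R - P) \<in> (R - P) \<rightarrow>\<^sub>E ((R - P) \<union> (T \<union> P))" using step by auto
  ultimately show ?thesis unfolding rooted_forest_maps_def by blast
qed

lemma bij_betw_maps_with_cyclic_points:
  assumes "finite R" "R \<inter> T = {}"
  shows "bij_betw (\<lambda>(P, s, h). override_on h s P)
    (SIGMA P:{P. P \<subseteq> R \<and> card P = p}. {s. s permutes P} \<times> rooted_forest_maps (R - P) (T \<union> P))
    (maps_with_cyclic_points R T p)" (is "bij_betw ?merge ?A ?B")
proof -
  define split where "split g =
    (let P = cyclic_points R g in (P, \<lambda>x. if x \<in> P then g x else x, restrict g (R - P)))" for g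
  have split_merge: "split (override_on h s P) = (P, s, h)"
    if P: "P \<subseteq> R" and s: "s permutes P" and h: "h \<in> rooted_forest_maps (R - P) (T \<union> P)" for P s h
  proof -
    have "cyclic_points R (override_on h s P) = P"
      using cyclic_points_override_on[OF s P h assms] .
    moreover have "(\<lambda>x. if x \<in> P then override_on h s P x else x) = s"
      using permutes_not_in[OF s] by auto
    moreover have "restrict (override_on h s P) (R - P) = h"
      using h by (auto simp: rooted_forest_maps_def restrict_def PiE_iff extensional_def)
    ultimately show ?thesis unfolding split_def by simp
  qed
  have merge_split: "?merge (split g) = g" if "g \<in> ?B" for g
    using that cyclic_points_subset[of R g]
    by (auto simp: split_def Let_def maps_with_cyclic_points_def override_on_def PiE_iff
        extensional_def fun_eq_iff)
  have split_into: "split g \<in> ?A" if "g \<in> ?B" for g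
    using that cyclic_points_subset[of R g] permutes_cyclic_points[OF assms(1), of g]
      restrict_noncyclic_in_rooted_forest_maps[OF _ assms]
    by (auto simp: split_def Let_def maps_with_cyclic_points_def)
  have merge_into: "?merge x \<in> ?B" if x_in: "x \<in> ?A" for x
  proof -
    obtain P s h where x: "x = (P, s, h)" and P: "P \<subseteq> R" "card P = p" and s: "s permutes P"
      and h: "h \<in> rooted_forest_maps (R - P) (T \<union> P)"
      using x_in by auto
    show ?thesis
      using override_on_permutes_in_PiE[OF s P(1) h] cyclic_points_override_on[OF s P(1) h assms]
        x P(2) by (simp add: maps_with_cyclic_points_def)
  qed
  show ?thesis
  proof (rule bij_betw_byWitness[where f' = split])
    show "\<forall>x\<in>?A. split (?merge x) = x" using split_merge by auto
    show "\<forall>g\<in>?B. ?merge (split g) = g" using merge_split by blast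
    show "?merge ` ?A \<subseteq> ?B" using merge_into by blast
    show "split ` ?B \<subseteq> ?A" using split_into by blast
  qed
qed

lemma card_maps_with_cyclic_points:
  assumes "finite R" "finite T" "R \<inter> T = {}"
  shows "card (maps_with_cyclic_points R T p) = num_maps_with_cyclic_points (card R) (card T) p"
proof -
  let ?S = "{P. P \<subseteq> R \<and> card P = p}"
  have card_fibre: "card ({s. s permutes P} \<times> rooted_forest_maps (R - P) (T \<union> P))
      = fact p * num_forests (card R - p) (card T + p)" if "P \<in> ?S" for P
  proof -
    have P: "finite P" "P \<subseteq> R" "card P = p" using that assms(1) finite_subset by auto
    moreover have "card (T \<union> P) = card T + p"
      using P assms by (subst card_Un_disjoint) auto
    ultimately have "card (rooted_forest_maps (R - P) (T \<union> P)) = num_forests (card R - p) (card T + p)"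
      using assms by (subst card_rooted_forest_maps) (auto simp: card_Diff_subset)
    then show ?thesis using P by (simp add: card_cartesian_product card_permutations)
  qed
  have "card (maps_with_cyclic_points R T p)
      = card (SIGMA P:?S. {s. s permutes P} \<times> rooted_forest_maps (R - P) (T \<union> P))"
    using bij_betw_same_card[OF bij_betw_maps_with_cyclic_points[OF assms(1,3)]] by simp
  also have "\<dots> = (\<Sum>P\<in>?S. fact p * num_forests (card R - p) (card T + p))"
  proof -
    have "finite ?S" using assms(1) by (auto intro: finite_subset[of _ "Pow R"])
    moreover have "\<forall>P\<in>?S. finite ({s. s permutes P} \<times> rooted_forest_maps (R - P) (T \<union> P))"
      using assms(1,2) by (auto intro!: finite_permutations finite_rooted_forest_maps dest: finite_subset)
    ultimately show ?thesis using card_fibre by simp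
  qed
  also have "\<dots> = num_maps_with_cyclic_points (card R) (card T) p"
    using n_subsets[OF assms(1), of p] by (simp add: num_maps_with_cyclic_points_def)
  finally show ?thesis .
qed

section \<open>Lassos\<close>

text \<open>A lasso of length \<open>l\<close> visits its positions in the order \<open>0, 1, \<dots>, l - 1\<close> and then
  returns to position \<open>r\<close>.\<close>
definition lasso_succ :: "nat \<Rightarrow> nat \<Rightarrow> nat \<Rightarrow> nat" where
  "lasso_succ l r q = (if Suc q < l then Suc q else r)"

definition lasso_map :: "'a list \<Rightarrow> nat \<Rightarrow> ('a \<Rightarrow> 'a) \<Rightarrow> 'a \<Rightarrow> 'a" where
  "lasso_map zs r g x =
    (if x \<in> set zs then zs ! lasso_succ (length zs) r (THE q. q < length zs \<and> zs ! q = x) else g x)"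

lemma lasso_succ_less: "r < l \<Longrightarrow> q < l \<Longrightarrow> lasso_succ l r q < l"
  by (simp add: lasso_succ_def)

lemma lasso_succ_pos: "0 < r \<Longrightarrow> 0 < lasso_succ l r q"
  by (simp add: lasso_succ_def)

lemma funpow_lasso_succ_less: "r < l \<Longrightarrow> q < l \<Longrightarrow> (lasso_succ l r ^^ k) q < l"
  by (induction k) (simp_all add: lasso_succ_less)

lemma funpow_lasso_succ_0: "m < l \<Longrightarrow> (lasso_succ l r ^^ m) 0 = m"
  by (induction m) (simp_all add: lasso_succ_def)

lemma funpow_lasso_succ_loop:
  assumes "r \<le> q" "q < l"
  shows "(lasso_succ l r ^^ d) q = r + (q - r + d) mod (l - r)"
proof (induction d)
  case (Suc d)
  let ?t = "(q - r + d) mod (l - r)"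
  have "?t < l - r" using assms by simp
  then have "lasso_succ l r (r + ?t) = r + (if Suc ?t = l - r then 0 else Suc ?t)"
    by (auto simp: lasso_succ_def)
  also have "(if Suc ?t = l - r then 0 else Suc ?t) = (q - r + Suc d) mod (l - r)"
    by (simp add: mod_Suc)
  finally show ?case using Suc by simp
qed (use assms in simp)

lemma funpow_lasso_succ_period:
  assumes "r \<le> q" "q < l"
  shows "(lasso_succ l r ^^ (l - r)) q = q"
proof -
  have "(lasso_succ l r ^^ (l - r)) q = r + (q - r + (l - r)) mod (l - r)"
    using assms by (rule funpow_lasso_succ_loop)
  also have "\<dots> = r + (q - r) mod (l - r)" by (simp only: mod_add_self2)
  also have "\<dots> = q" using assms by simp
  finally show ?thesis .
qed

lemma funpow_lasso_succ_tail: "q < r \<Longrightarrow> q < (lasso_succ l r ^^ Suc k) q"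
  by (induction k) (auto simp: lasso_succ_def)

lemma lasso_map_notin: "x \<notin> set zs \<Longrightarrow> lasso_map zs r g x = g x"
  by (simp add: lasso_map_def)

context
  fixes zs :: "nat list" and r :: nat
  assumes distinct: "distinct zs" and r_less: "r < length zs"
begin

lemma lasso_map_nth:
  assumes "q < length zs"
  shows "lasso_map zs r g (zs ! q) = zs ! lasso_succ (length zs) r q"
proof -
  have "(THE q'. q' < length zs \<and> zs ! q' = zs ! q) = q"
    using assms distinct by (auto simp: nth_eq_iff_index_eq)
  then show ?thesis using assms by (simp add: lasso_map_def)
qed

lemma funpow_lasso_map_nth:
  "q < length zs \<Longrightarrow> (lasso_map zs r g ^^ k) (zs ! q) = zs ! ((lasso_succ (length zs) r ^^ k) q)"
  by (induction k) (simp_all add: lasso_map_nth funpow_lasso_succ_less r_less)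

lemma lasso_map_in_set: "x \<in> set zs \<Longrightarrow> lasso_map zs r g x \<in> set zs"
  by (metis in_set_conv_nth lasso_map_nth lasso_succ_less nth_mem r_less)

lemma orbit_of_lasso_map: "orbit_of (lasso_map zs r g) (zs ! 0) = set zs"
proof -
  have "0 < length zs" using r_less by (cases zs) auto
  then have "(lasso_map zs r g ^^ k) (zs ! 0) \<in> set zs" for k
    by (simp add: funpow_lasso_map_nth funpow_lasso_succ_less r_less)
  moreover have "zs ! q = (lasso_map zs r g ^^ q) (zs ! 0)" if "q < length zs" for q
    using that \<open>0 < length zs\<close> by (simp add: funpow_lasso_map_nth funpow_lasso_succ_0)
  ultimately show ?thesis
    unfolding orbit_of_def by (fastforce simp: in_set_conv_nth)
qed

lemma periodic_pt_lasso_map_nth: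
  assumes "q < length zs"
  shows "periodic_pt (lasso_map zs r g) (zs ! q) \<longleftrightarrow> r \<le> q"
proof
  assume "periodic_pt (lasso_map zs r g) (zs ! q)"
  then obtain k where "k \<ge> 1" "(lasso_map zs r g ^^ k) (zs ! q) = zs ! q"
    unfolding periodic_pt_def by blast
  then have "(lasso_succ (length zs) r ^^ k) q = q"
    using assms distinct r_less
    by (simp add: funpow_lasso_map_nth nth_eq_iff_index_eq funpow_lasso_succ_less)
  moreover have "q < (lasso_succ (length zs) r ^^ k) q" if "q < r"
    using funpow_lasso_succ_tail[OF that, where l = "length zs" and k = "k - 1"] \<open>k \<ge> 1\<close> by simp
  ultimately show "r \<le> q" by fastforce
next
  assume "r \<le> q"
  then have "(lasso_map zs r g ^^ (length zs - r)) (zs ! q) = zs ! q"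
    using assms by (simp add: funpow_lasso_map_nth funpow_lasso_succ_period)
  then show "periodic_pt (lasso_map zs r g) (zs ! q)"
    unfolding periodic_pt_def using r_less by (intro exI[of _ "length zs - r"]) simp
qed

lemma periodic_pt_lasso_map_notin:
  assumes g: "\<And>y. y \<in> R \<Longrightarrow> g y \<in> R \<union> set zs" and disj: "R \<inter> set zs = {}" and "x \<in> R"
  shows "periodic_pt (lasso_map zs r g) x \<longleftrightarrow> x \<in> cyclic_points R g"
proof
  let ?f = "lasso_map zs r g"
  have agree: "?f y = g y" if "y \<in> R" for y
    using that disj by (simp add: lasso_map_notin disjoint_iff)
  {
    assume "periodic_pt ?f x"
    then obtain k where k: "k \<ge> 1" "(?f ^^ k) x = x" unfolding periodic_pt_def by blast
    have f_closed: "?f y \<in> R \<union> set zs" if "y \<in> R \<union> set zs" for y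
    proof (cases "y \<in> R")
      case True
      then show ?thesis using agree g by simp
    next
      case False
      then show ?thesis using that lasso_map_in_set by simp
    qed
    have "(?f ^^ m) x \<in> R \<union> set zs" for m
      by (rule funpow_in_invariant[OF f_closed]) (use \<open>x \<in> R\<close> in simp_all)
    moreover have "(?f ^^ m) x \<notin> set zs" for m
    proof
      assume "(?f ^^ m) x \<in> set zs"
      then have "x \<in> set zs"
        using periodic_in_invariant[where S = "set zs" and g = ?f] lasso_map_in_set k by blast
      then show False using disj \<open>x \<in> R\<close> by blast
    qed
    ultimately have orbit: "(?f ^^ m) x \<in> R" for m by blast
    then have "(?f ^^ m) x = (g ^^ m) x" for m
      by (intro funpow_eq_if_orbit_in[where S = R]) (auto simp: agree)
    then show "x \<in> cyclic_points R g" using k orbit by (auto simp: cyclic_points_iff)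
  }
  assume "x \<in> cyclic_points R g"
  then obtain k where k: "k \<ge> 1" "(g ^^ k) x = x" and orbit: "\<And>m. (g ^^ m) x \<in> R"
    by (auto simp: cyclic_points_iff)
  have "(g ^^ k) x = (?f ^^ k) x"
    by (rule funpow_eq_if_orbit_in[where S = R]) (use orbit agree in auto)
  then show "periodic_pt ?f x" unfolding periodic_pt_def using k by (intro exI[of _ k]) simp
qed

lemma card_periodic_lasso_map:
  assumes "\<And>y. y \<in> R \<Longrightarrow> g y \<in> R \<union> set zs" and disj: "R \<inter> set zs = {}" and "finite R"
  shows "card {x \<in> set zs \<union> R. periodic_pt (lasso_map zs r g) x}
    = (length zs - r) + card (cyclic_points R g)"
proof -
  have "{x \<in> set zs. periodic_pt (lasso_map zs r g) x} = (!) zs ` {r..<length zs}"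
  proof (intro equalityI subsetI)
    fix x assume "x \<in> {x \<in> set zs. periodic_pt (lasso_map zs r g) x}"
    then obtain q where "q < length zs" "x = zs ! q" "periodic_pt (lasso_map zs r g) x"
      by (auto simp: in_set_conv_nth)
    then show "x \<in> (!) zs ` {r..<length zs}" using periodic_pt_lasso_map_nth by auto
  next
    fix x assume "x \<in> (!) zs ` {r..<length zs}"
    then obtain q where "r \<le> q" "q < length zs" "x = zs ! q" by auto
    then show "x \<in> {x \<in> set zs. periodic_pt (lasso_map zs r g) x}"
      using periodic_pt_lasso_map_nth by auto
  qed
  moreover have "{x \<in> R. periodic_pt (lasso_map zs r g) x} = cyclic_points R g"
    using periodic_pt_lasso_map_notin[where R = R and g = g, OF assms(1,2)] cyclic_points_subset
    by blast
  ultimately have "{x \<in> set zs \<union> R. periodic_pt (lasso_map zs r g) x}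
      = (!) zs ` {r..<length zs} \<union> cyclic_points R g" by blast
  moreover have "card ((!) zs ` {r..<length zs}) = length zs - r"
    using distinct by (subst card_image) (auto simp: inj_on_def nth_eq_iff_index_eq)
  moreover have "(!) zs ` {r..<length zs} \<inter> cyclic_points R g = {}"
    using disj cyclic_points_subset by fastforce
  moreover have "finite (cyclic_points R g)"
    using \<open>finite R\<close> cyclic_points_subset finite_subset by blast
  ultimately show ?thesis by (simp add: card_Un_disjoint)
qed

lemma lasso_map_eqI:
  assumes "\<And>q. q < length zs \<Longrightarrow> f (zs ! q) = zs ! lasso_succ (length zs) r q"
    and "\<And>x. x \<notin> set zs \<Longrightarrow> f x = g x"
  shows "lasso_map zs r g = f"
proof
  fix x
  show "lasso_map zs r g x = f x"
    using assms lasso_map_nth lasso_map_notin by (cases "x \<in> set zs") (auto simp: in_set_conv_nth)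
qed

end

lemma lasso_map_eqD:
  fixes zs zs' :: "nat list"
  assumes "distinct zs" "r < length zs" "distinct zs'" "r' < length zs'"
    and "length zs = length zs'" "zs ! 0 = zs' ! 0"
    and eq: "lasso_map zs r g = lasso_map zs' r' g'"
  shows "zs = zs'" and "r = r'" and "x \<notin> set zs \<Longrightarrow> g x = g' x"
proof -
  have "0 < length zs" using assms(2) by linarith
  show zs: "zs = zs'"
  proof (rule nth_equalityI)
    fix q assume "q < length zs"
    then have "zs ! q = (lasso_map zs r g ^^ q) (zs ! 0)"
      and "zs' ! q = (lasso_map zs' r' g' ^^ q) (zs' ! 0)"
      using \<open>0 < length zs\<close> assms(5)
      by (simp_all add: funpow_lasso_map_nth[OF assms(1,2)] funpow_lasso_map_nth[OF assms(3,4)]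
          funpow_lasso_succ_0)
    then show "zs ! q = zs' ! q" using eq assms(6) by simp
  qed (use assms(5) in simp)
  let ?last = "length zs - 1"
  have "lasso_map zs r g (zs ! ?last) = zs ! r" and "lasso_map zs' r' g' (zs ! ?last) = zs ! r'"
    using \<open>0 < length zs\<close> lasso_map_nth[OF assms(1,2)] lasso_map_nth[OF assms(3,4)] zs
    by (auto simp: lasso_succ_def)
  then show "r = r'" using eq assms(1,2,4) zs by (simp add: nth_eq_iff_index_eq)
  show "g x = g' x" if "x \<notin> set zs"
    using fun_cong[OF eq, of x] that zs by (simp add: lasso_map_notin)
qed

section \<open>Counting the functions in \<open>Fset\<close>\<close>

text \<open>The lasso \<open>Suc n # ys\<close> closes at position \<open>i - s\<close>, so its cycle has \<open>s + 1\<close> points.\<close>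
lemma lasso_map_in_Fset:
  assumes ys: "length ys = i" "distinct ys" "set ys \<subseteq> {1..n}" and s: "s < min i j"
    and g: "g \<in> maps_with_cyclic_points ({1..n} - set ys) (set ys) (j - Suc s)"
  shows "lasso_map (Suc n # ys) (i - s) g \<in> Fset n (Suc i) j"
proof -
  let ?zs = "Suc n # ys" and ?R = "{1..n} - set ys" and ?f = "lasso_map (Suc n # ys) (i - s) g"
  have zs: "distinct ?zs" "i - s < length ?zs" using ys by auto
  have g_maps: "g \<in> ?R \<rightarrow>\<^sub>E (?R \<union> set ys)" and g_cyclic: "card (cyclic_points ?R g) = j - Suc s"
    using g by (auto simp: maps_with_cyclic_points_def)
  have g_maps': "\<And>y. y \<in> ?R \<Longrightarrow> g y \<in> ?R \<union> set ?zs" using g_maps by auto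
  have disj: "?R \<inter> set ?zs = {}" by auto
  have domain: "{1..Suc n} = set ?zs \<union> ?R" using ys(3) by auto
  have f_zs: "?f x \<in> {1..n}" if "x \<in> set ?zs" for x
  proof -
    obtain q where q: "q < length ?zs" "x = ?zs ! q" using \<open>x \<in> set ?zs\<close> by (metis in_set_conv_nth)
    let ?q' = "lasso_succ (length ?zs) (i - s) q"
    have "0 < ?q'" "?q' < length ?zs" using s q(1) zs(2) by (simp_all add: lasso_succ_pos lasso_succ_less)
    then have "?zs ! ?q' \<in> set ys" by (cases ?q') auto
    then show ?thesis using lasso_map_nth[OF zs q(1)] q(2) ys(3) by auto
  qed
  have f_R: "?f x \<in> {1..n}" if "x \<in> ?R" for x
  proof -
    have "g x \<in> ?R \<union> set ys" using g_maps that by (rule PiE_mem)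
    moreover have "x \<notin> set ?zs" using that by auto
    ultimately show ?thesis using ys(3) lasso_map_notin[of x ?zs] by auto
  qed
  have f_out: "?f x = undefined" if "x \<notin> {1..Suc n}" for x
  proof -
    have "x \<notin> set ?zs" and x_R: "x \<notin> ?R" using that domain by blast+
    then show ?thesis using PiE_arb[OF g_maps x_R] lasso_map_notin[of x ?zs] by simp
  qed
  have "?f \<in> {1..Suc n} \<rightarrow>\<^sub>E {1..n}"
  proof (rule PiE_I)
    fix x assume "x \<in> {1..Suc n}"
    then have "x \<in> set ?zs \<or> x \<in> ?R" unfolding domain by blast
    then show "?f x \<in> {1..n}" using f_zs f_R by blast
  qed (rule f_out)
  moreover have "card (orbit_of ?f (Suc n)) = Suc i"
    using orbit_of_lasso_map[OF zs] zs(1) ys(1) by (simp add: distinct_card)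
  moreover have "card {x \<in> {1..Suc n}. periodic_pt ?f x} = j"
    using card_periodic_lasso_map[OF zs g_maps' disj] g_cyclic s ys(1) unfolding domain by simp
  ultimately show ?thesis by (simp add: Fset_def)
qed

lemma lasso_of_orbit:
  assumes f_maps: "f \<in> {1..Suc n} \<rightarrow>\<^sub>E {1..n}" and orbit_card: "card (orbit_of f (Suc n)) = Suc i"
  obtains ys t where "length ys = i" "distinct (Suc n # ys)" "set ys \<subseteq> {1..n}" "0 < t" "t \<le> i"
    and "\<And>q. q < Suc i \<Longrightarrow> f ((Suc n # ys) ! q) = (Suc n # ys) ! lasso_succ (Suc i) t q"
proof -
  define a where "a k = (f ^^ k) (Suc n)" for k
  have f_step: "f y \<in> {1..n}" if "y \<in> {1..Suc n}" for y using f_maps that by (rule PiE_mem)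
  have a_in: "a k \<in> {1..Suc n}" for k
  proof (induction k)
    case (Suc k)
    then show ?case using f_step[of "a k"] by (simp add: a_def)
  qed (simp add: a_def)
  then have a_Suc_in: "a (Suc k) \<in> {1..n}" for k using f_step by (simp add: a_def)
  have "orbit_of f (Suc n) \<subseteq> {1..Suc n}" using a_in by (auto simp: orbit_of_def a_def)
  then have "finite (orbit_of f (Suc n))" using finite_subset by blast
  from orbit_of_lasso[OF this] obtain t where inj: "inj_on a {..<Suc i}" and t: "t < Suc i" "a (Suc i) = a t"
    unfolding orbit_card a_def by auto
  have "t \<noteq> 0"
  proof
    assume "t = 0"
    then have "a (Suc i) = Suc n" using t by (simp add: a_def)
    then show False using a_Suc_in[of i] by simp
  qed
  define ys where "ys = map (\<lambda>k. a (Suc k)) [0..<i]"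
  let ?zs = "Suc n # ys"
  have zs: "?zs = map a [0..<Suc i]" unfolding map_upt_Suc ys_def by (simp add: a_def)
  have nth_zs: "?zs ! q = a q" if "q < Suc i" for q
    using that by (subst zs) (simp del: upt_Suc)
  have distinct_zs: "distinct ?zs"
    using inj distinct_upt[of 0 "Suc i"] unfolding zs distinct_map set_upt atLeast0LessThan by blast
  then have ys: "length ys = i" "distinct ys" "set ys \<subseteq> {1..n}"
    using a_Suc_in by (auto simp: ys_def)
  have f_lasso: "f (?zs ! q) = ?zs ! lasso_succ (Suc i) t q" if q: "q < Suc i" for q
  proof -
    have "f (?zs ! q) = a (Suc q)" using nth_zs q by (simp add: a_def)
    also have "\<dots> = ?zs ! lasso_succ (Suc i) t q"
    proof (cases "Suc q < Suc i")
      case True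
      then show ?thesis by (simp add: lasso_succ_def ys_def)
    next
      case False
      then have "q = i" using q by simp
      then show ?thesis using t nth_zs by (simp add: lasso_succ_def)
    qed
    finally show ?thesis .
  qed
  show thesis
    by (rule that[OF ys(1) distinct_zs ys(3) _ _ f_lasso]) (use t \<open>t \<noteq> 0\<close> in auto)
qed

lemma Fset_lassoE:
  assumes "f \<in> Fset n (Suc i) j"
  obtains ys s g where "length ys = i" "distinct ys" "set ys \<subseteq> {1..n}" "s < min i j"
    and "g \<in> maps_with_cyclic_points ({1..n} - set ys) (set ys) (j - Suc s)"
    and "f = lasso_map (Suc n # ys) (i - s) g"
proof -
  have f_maps: "f \<in> {1..Suc n} \<rightarrow>\<^sub>E {1..n}" and orbit_card: "card (orbit_of f (Suc n)) = Suc i"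
    and periodic_card: "card {x \<in> {1..Suc n}. periodic_pt f x} = j"
    using assms by (auto simp: Fset_def)
  obtain ys t where length_ys: "length ys = i" and distinct_zs: "distinct (Suc n # ys)"
    and set_ys: "set ys \<subseteq> {1..n}" and t: "0 < t" "t \<le> i"
    and f_lasso: "\<And>q. q < Suc i \<Longrightarrow> f ((Suc n # ys) ! q) = (Suc n # ys) ! lasso_succ (Suc i) t q"
    using lasso_of_orbit[OF f_maps orbit_card] by blast
  note ys = length_ys set_ys
  define s where "s = i - t"
  let ?zs = "Suc n # ys" and ?R = "{1..n} - set ys"
  have "t < length ?zs" "i - s = t" "s < i" using t ys(1) by (auto simp: s_def)
  define g where "g = restrict f ?R"
  have f_eq: "f = lasso_map ?zs t g"
  proof (rule lasso_map_eqI[OF distinct_zs \<open>t < length ?zs\<close>, symmetric])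
    show "f (?zs ! q) = ?zs ! lasso_succ (length ?zs) t q" if "q < length ?zs" for q
      using f_lasso that ys(1) by simp
  next
    fix x assume x: "x \<notin> set ?zs"
    show "f x = g x"
    proof (cases "x \<in> ?R")
      case False
      then have "x \<notin> {1..Suc n}" using x by auto
      then show ?thesis using False PiE_arb[OF f_maps] by (simp add: g_def)
    qed (simp add: g_def)
  qed
  have g_maps: "g \<in> ?R \<rightarrow>\<^sub>E (?R \<union> set ys)" using f_maps ys(2) by (auto simp: g_def)
  have "j = Suc s + card (cyclic_points ?R g)"
  proof -
    have "{1..Suc n} = set ?zs \<union> ?R" using ys(2) by auto
    then have "j = card {x \<in> set ?zs \<union> ?R. periodic_pt (lasso_map ?zs t g) x}"
      using periodic_card f_eq by simp
    also have "\<dots> = (length ?zs - t) + card (cyclic_points ?R g)"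
      by (rule card_periodic_lasso_map[OF distinct_zs \<open>t < length ?zs\<close>]) (use g_maps in auto)
    finally show ?thesis using \<open>i - s = t\<close> \<open>s < i\<close> ys(1) by simp
  qed
  then have "s < min i j" "g \<in> maps_with_cyclic_points ?R (set ys) (j - Suc s)"
    using \<open>s < i\<close> g_maps by (auto simp: maps_with_cyclic_points_def)
  then show thesis using that ys distinct_zs f_eq \<open>i - s = t\<close> by auto
qed

lemma bij_betw_lasso_map_Fset:
  "bij_betw (\<lambda>((ys, s), g). lasso_map (Suc n # ys) (i - s) g)
    (SIGMA (ys, s):{ys. length ys = i \<and> distinct ys \<and> set ys \<subseteq> {1..n}} \<times> {..<min i j}.
      maps_with_cyclic_points ({1..n} - set ys) (set ys) (j - Suc s))
    (Fset n (Suc i) j)" (is "bij_betw ?merge ?A _")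
proof (rule bij_betw_imageI)
  show "inj_on ?merge ?A"
  proof (rule inj_onI)
    fix x x' assume "x \<in> ?A" "x' \<in> ?A" and eq: "?merge x = ?merge x'"
    then obtain ys s g ys' s' g' where x: "x = ((ys, s), g)" "x' = ((ys', s'), g')"
      and ys: "length ys = i" "distinct ys" "set ys \<subseteq> {1..n}" "s < min i j"
      and ys': "length ys' = i" "distinct ys'" "set ys' \<subseteq> {1..n}" "s' < min i j"
      and g: "g \<in> maps_with_cyclic_points ({1..n} - set ys) (set ys) (j - Suc s)"
      and g': "g' \<in> maps_with_cyclic_points ({1..n} - set ys') (set ys') (j - Suc s')"
      by auto
    have eq': "lasso_map (Suc n # ys) (i - s) g = lasso_map (Suc n # ys') (i - s') g'"
      using eq x by simp
    have "distinct (Suc n # ys)" "i - s < length (Suc n # ys)"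
      "distinct (Suc n # ys')" "i - s' < length (Suc n # ys')"
      "length (Suc n # ys) = length (Suc n # ys')" "(Suc n # ys) ! 0 = (Suc n # ys') ! 0"
      using ys ys' by auto
    note lasso_eq = lasso_map_eqD[OF this eq']
    have "Suc n # ys = Suc n # ys'" "i - s = i - s'" by (fact lasso_eq)+
    then have "ys = ys'" "s = s'" using ys(4) ys'(4) by auto
    moreover have "g = g'"
    proof (rule PiE_ext)
      show "g \<in> ({1..n} - set ys) \<rightarrow>\<^sub>E (({1..n} - set ys) \<union> set ys)"
        and "g' \<in> ({1..n} - set ys) \<rightarrow>\<^sub>E (({1..n} - set ys) \<union> set ys)"
        using g g' \<open>ys = ys'\<close> by (simp_all add: maps_with_cyclic_points_def)
      show "g y = g' y" if "y \<in> {1..n} - set ys" for y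
        using that by (intro lasso_eq(3)) auto
    qed
    ultimately show "x = x'" using x by simp
  qed
  show "?merge ` ?A = Fset n (Suc i) j"
  proof (intro equalityI subsetI)
    fix f assume "f \<in> ?merge ` ?A"
    then obtain ys s g where "f = lasso_map (Suc n # ys) (i - s) g"
      and "length ys = i" "distinct ys" "set ys \<subseteq> {1..n}" "s < min i j"
      and "g \<in> maps_with_cyclic_points ({1..n} - set ys) (set ys) (j - Suc s)"
      by auto
    then show "f \<in> Fset n (Suc i) j" using lasso_map_in_Fset by blast
  next
    fix f assume "f \<in> Fset n (Suc i) j"
    then obtain ys s g where "length ys = i" "distinct ys" "set ys \<subseteq> {1..n}" "s < min i j"
      and "g \<in> maps_with_cyclic_points ({1..n} - set ys) (set ys) (j - Suc s)"
      and "f = lasso_map (Suc n # ys) (i - s) g"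
      by (rule Fset_lassoE)
    then show "f \<in> ?merge ` ?A" by (intro image_eqI[of _ _ "((ys, s), g)"]) auto
  qed
qed

lemma card_Fset_Suc:
  "card (Fset n (Suc i) j) = card {ys. length ys = i \<and> distinct ys \<and> set ys \<subseteq> {1..n}}
    * (\<Sum>s<min i j. num_maps_with_cyclic_points (n - i) i (j - Suc s))"
proof -
  let ?D = "{ys. length ys = i \<and> distinct ys \<and> set ys \<subseteq> {1..n}}"
  let ?G = "\<lambda>ys s. maps_with_cyclic_points ({1..n} - set ys) (set ys) (j - Suc s)"
  have "finite ?D"
    by (rule finite_subset[OF _ finite_lists_length_eq[of "{1..n}" i]]) auto
  have card_G: "card (?G ys s) = num_maps_with_cyclic_points (n - i) i (j - Suc s)" if "ys \<in> ?D" for ys s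
  proof -
    have "card (set ys) = i" using that by (simp add: distinct_card)
    moreover have "card ({1..n} - set ys) = n - i"
      using that calculation by (simp add: card_Diff_subset)
    moreover have "card (?G ys s) = num_maps_with_cyclic_points
        (card ({1..n} - set ys)) (card (set ys)) (j - Suc s)"
      by (rule card_maps_with_cyclic_points) auto
    ultimately show ?thesis by simp
  qed
  have "finite (?G ys s)" for ys s
  proof (rule finite_subset)
    show "?G ys s \<subseteq> ({1..n} - set ys) \<rightarrow>\<^sub>E (({1..n} - set ys) \<union> set ys)"
      by (auto simp: maps_with_cyclic_points_def)
  qed (auto intro: finite_PiE)
  then have finite_G: "\<forall>x\<in>?D \<times> {..<min i j}. finite (case x of (ys, s) \<Rightarrow> ?G ys s)" by auto
  have "card (Fset n (Suc i) j) = card (SIGMA (ys, s):?D \<times> {..<min i j}. ?G ys s)"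
    using bij_betw_same_card[OF bij_betw_lasso_map_Fset] by simp
  also have "\<dots> = (\<Sum>x\<in>?D \<times> {..<min i j}. card (case x of (ys, s) \<Rightarrow> ?G ys s))"
    using \<open>finite ?D\<close> finite_G by (intro card_SigmaI) auto
  also have "\<dots> = (\<Sum>(ys, s)\<in>?D \<times> {..<min i j}. num_maps_with_cyclic_points (n - i) i (j - Suc s))"
  proof (rule sum.cong[OF refl])
    fix x assume "x \<in> ?D \<times> {..<min i j}"
    then obtain ys s where "x = (ys, s)" "ys \<in> ?D" by blast
    then show "card (case x of (ys, s) \<Rightarrow> ?G ys s)
        = (case x of (ys, s) \<Rightarrow> num_maps_with_cyclic_points (n - i) i (j - Suc s))"
      using card_G by simp
  qed
  also have "\<dots> = (\<Sum>ys\<in>?D. \<Sum>s<min i j. num_maps_with_cyclic_points (n - i) i (j - Suc s))"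
    by (rule sum.cartesian_product[symmetric])
  finally show ?thesis by simp
qed

lemma card_distinct_lists_mult_fact:
  assumes "i \<le> n"
  shows "card {ys. length ys = i \<and> distinct ys \<and> set ys \<subseteq> {1..n}} * fact (n - i) = (fact n :: nat)"
proof -
  have "card {ys. length ys = i \<and> distinct ys \<and> set ys \<subseteq> {1..n}}
      = \<Prod>{card {1..n} - i + 1..card {1..n}}"
    by (rule card_lists_distinct_length_eq) (use assms in simp_all)
  moreover have "(fact n :: nat) = fact (n - i) * \<Prod>{Suc (n - i)..n}"
    by (rule fact_eq_fact_times) simp
  ultimately show ?thesis by (simp add: mult.commute)
qed

lemma distinct_lists_empty:
  assumes "n < i"
  shows "{ys. length ys = i \<and> distinct ys \<and> set ys \<subseteq> {1..n}} = {}"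
proof -
  have False if "length ys = i" "distinct ys" "set ys \<subseteq> {1..n}" for ys
  proof -
    have "card (set ys) \<le> n" using card_mono[OF _ that(3)] by simp
    then show False using that(1,2) assms by (simp add: distinct_card)
  qed
  then show ?thesis by blast
qed

lemma card_distinct_lists_mult_binomial_fact:
  assumes "i + p \<le> n"
  shows "card {ys. length ys = i \<and> distinct ys \<and> set ys \<subseteq> {1..n}} * ((n - i) choose p)
    * fact p * fact (n - (i + p)) = (fact n :: nat)"
proof -
  let ?D = "{ys. length ys = i \<and> distinct ys \<and> set ys \<subseteq> {1..n}}"
  have "card ?D * ((n - i) choose p) * fact p * fact (n - (i + p))
      = card ?D * (fact p * fact (n - i - p) * ((n - i) choose p))"
    by (simp add: mult_ac)
  also have "\<dots> = card ?D * fact (n - i)" using assms by (subst binomial_fact_lemma) simp_all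
  also have "\<dots> = fact n" using assms by (intro card_distinct_lists_mult_fact) simp
  finally show ?thesis .
qed

lemma card_distinct_lists_mult_binomial_eq_0:
  assumes "n < i + p"
  shows "card {ys. length ys = i \<and> distinct ys \<and> set ys \<subseteq> {1..n}} * ((n - i) choose p) = 0"
proof (cases "n < i")
  case True
  then show ?thesis by (simp only: distinct_lists_empty card.empty mult_0)
next
  case False
  then have "n - i < p" using assms by simp
  then show ?thesis by simp
qed

lemma card_distinct_lists_mult_num_maps_with_cyclic_points:
  assumes "n \<ge> 1"
  shows "real (card {ys. length ys = i \<and> distinct ys \<and> set ys \<subseteq> {1..n}}
      * num_maps_with_cyclic_points (n - i) i p)
    = real (i + p) * fact n * inv_fact (int n - int (i + p)) * real n powi (int n - int (i + p) - 1)"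
proof (cases "i + p \<le> n")
  case False
  then have "inv_fact (int n - int (i + p)) = 0" by (simp add: inv_fact_def)
  moreover have "card {ys. length ys = i \<and> distinct ys \<and> set ys \<subseteq> {1..n}} * ((n - i) choose p) = 0"
    using False by (intro card_distinct_lists_mult_binomial_eq_0) simp
  ultimately show ?thesis
    by (simp only: num_maps_with_cyclic_points_def mult.assoc[symmetric] of_nat_mult)
next
  case True
  let ?D = "{ys. length ys = i \<and> distinct ys \<and> set ys \<subseteq> {1..n}}"
  let ?C = "(n - i) choose p"
  define q where "q = n - (i + p)"
  have count: "card ?D * ?C * fact p * fact q = (fact n :: nat)"
    unfolding q_def using True by (rule card_distinct_lists_mult_binomial_fact)
  have "card ?D * num_maps_with_cyclic_points (n - i) i p * fact q
      = (card ?D * ?C * fact p * fact q) * num_forests q (i + p)"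
    by (simp add: num_maps_with_cyclic_points_def q_def mult_ac)
  then have "real (card ?D * num_maps_with_cyclic_points (n - i) i p * fact q)
      = real (fact n * num_forests q (i + p))"
    unfolding count by (rule arg_cong)
  then have "real (card ?D * num_maps_with_cyclic_points (n - i) i p) * fact q
      = fact n * real (num_forests q (i + p))"
    by (simp only: of_nat_mult of_nat_fact)
  then have lhs: "real (card ?D * num_maps_with_cyclic_points (n - i) i p)
      = fact n * real (num_forests q (i + p)) / fact q"
    by (simp add: eq_divide_eq)
  have "int n - int (i + p) = int q" using True by (simp add: q_def)
  then have inv: "inv_fact (int n - int (i + p)) = 1 / fact q" by (simp add: inv_fact_def)
  show ?thesis
  proof (cases "q = 0")
    case True
    then have "i + p = n" using \<open>i + p \<le> n\<close> by (simp add: q_def)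
    then have exponent: "int n - int (i + p) - 1 = - 1" by simp
    have power: "real n powi (int n - int (i + p) - 1) = inverse (real n)"
      unfolding exponent by (simp add: power_int_minus)
    have "num_forests q (i + p) = 1" using True by (simp add: num_forests_def)
    then have "real (card ?D * num_maps_with_cyclic_points (n - i) i p) = fact n"
      unfolding lhs using True by simp
    moreover have "inv_fact (int n - int (i + p)) = 1" unfolding inv using True by simp
    ultimately show ?thesis unfolding power \<open>i + p = n\<close> using assms by simp
  next
    case False
    then have exponent: "int n - int (i + p) - 1 = int (q - 1)" and "q + (i + p) = n"
      using \<open>i + p \<le> n\<close> by (simp_all add: q_def)
    then have power: "real n powi (int n - int (i + p) - 1) = real n ^ (q - 1)"
      and forests: "num_forests q (i + p) = (i + p) * n ^ (q - 1)"
      using False by (simp_all only: exponent power_int_of_nat) (simp add: num_forests_def)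
    show ?thesis unfolding lhs inv power forests by simp
  qed
qed

theorem theorem4:
  fixes n i j :: nat
  assumes "n \<ge> 1"
  shows "real (card (Fset n (i+1) j)) =
    (\<Sum>s<min i j. (real i + real j - real s - 1) * fact n
        * inv_fact (int n - int i - int j + int s + 1)
        * real n powi (int n - int i - int j + int s))"
proof -
  let ?D = "{ys. length ys = i \<and> distinct ys \<and> set ys \<subseteq> {1..n}}"
  have "real (card (Fset n (i+1) j))
      = (\<Sum>s<min i j. real (card ?D * num_maps_with_cyclic_points (n - i) i (j - Suc s)))"
    by (simp add: card_Fset_Suc sum_distrib_left)
  also have "\<dots> = (\<Sum>s<min i j. (real i + real j - real s - 1) * fact n
        * inv_fact (int n - int i - int j + int s + 1)
        * real n powi (int n - int i - int j + int s))"
  proof (rule sum.cong[OF refl])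
    fix s assume "s \<in> {..<min i j}"
    then have "real i + real j - real s - 1 = real (i + (j - Suc s))"
      and "int n - int i - int j + int s + 1 = int n - int (i + (j - Suc s))"
      and "int n - int i - int j + int s = int n - int (i + (j - Suc s)) - 1"
      by auto
    then show "real (card ?D * num_maps_with_cyclic_points (n - i) i (j - Suc s))
        = (real i + real j - real s - 1) * fact n * inv_fact (int n - int i - int j + int s + 1)
          * real n powi (int n - int i - int j + int s)"
      by (simp only: card_distinct_lists_mult_num_maps_with_cyclic_points[OF assms])
  qed
  finally show ?thesis .
qed

end
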